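(* For a symbolic generalized matrix chain of $n$ matrices, the set of fanning-out variants $\mathcal{E}=\{E^0,E^1,\ldots,E^n\}$ has finite total penalty, i.e. $P(\mathcal{E})=\sup_{\boldsymbol{q}\in\mathbb{N}^{n+1}}P(\mathcal{E},\boldsymbol{q})<\infty$.
   Context: A generalized matrix chain (GMC) is a product $\mathrm{op}(M_1)\cdots\mathrm{op}(M_n)$ where $M_i$ has size $q_{i-1}\times q_i$, $\mathrm{op}(M)\in\{M,M^T,M^{-1},M^{-T}\}$, and each $M_i$ carries a structure (general, symmetric, lower-/upper-triangular; non-general structures imply squareness) and a property (singular, invertible, symmetric positive-definite, orthogonal). The shape is fixed and sizes are symbolic. An instance is $\boldsymbol{q}=(q_0,\ldots,q_n)\in\mathbb{N}^{n+1}$ consistent with the shape ($q_{i-1}=q_i$ whenever $M_i$ is necessarily square, i.e. non-general or inverted); the supremum ranges over such instances. Transposition is ignored. Each parenthesization determines exactly one variant: a sequence of $n-1$ associations $(K_i,(a_i,b_i,c_i))$, $0\le a_i<b_i<c_i\le n$, the $i$-th combining via kernel $K_i$ operands of sizes $q_{a_i}\times q_{b_i}$ and $q_{b_i}\times q_{c_i}$. It is built by performing the leftmost available association first and, per association: propagating an inversion to the result when both operands are inverted ($X^{-1}Y^{-1}=(YX)^{-1}$) or when one operand is inverted and general/symmetric while the other is orthogonal or non-singular triangular; assigning the most specialized matrix-product kernel (GEMM, SYMM, TRMM, SYSYMM, TRSYMM, TRTRMM) or linear-solve kernel (GEGESV, GESYSV, GETRSV, SYGESV, SYSYSV, SYTRSV,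 POGESV, POSYSV, POTRSV, TRSM, TRSYSV, TRTRSV; the inverted operand is the coefficient matrix); and inferring the features and sizes of the result by fixed rules. $\mathcal{A}$ is the set of all variants (one per parenthesization). The cost (FLOPs) of variant $A$ on $\boldsymbol{q}$ is $T(A,\boldsymbol{q})=\sum_{(K,(a,b,c))\in A}\phi_K(q_a,q_b,q_c)$, where each kernel cost has one of the forms, with positive kernel-specific constants: Type I $\beta abc$; Type IIa $\beta_1a^3+\beta_2a^2c$; Type IIb $\beta_1c^3+\beta_2c^2a$. Type II kernels are exactly the solves with a non-triangular coefficient matrix and general right-hand side (GEGESV: $\beta_1=2/3,\beta_2=2$; SYGESV, POGESV: $\beta_1=1/3,\beta_2=2$), IIa with the coefficient on the left ($a=b$), IIb on the right ($b=c$); all other kernels are Type I. Fanning-out variant $E^h$ ($h\in\{0,\ldots,n\}$): the variant of $(M_1(\cdots(M_{h-1}M_h)\cdots))((\cdots(M_{h+1}M_{h+2})\cdots)M_n)$, computing the prefix $M_1\cdots M_h$ right-to-left, the suffix $M_{h+1}\cdots M_n$ left-to-right, then associating the two results. Penalty: for $\mathcal{Z}\subseteq\mathcal{A}$ nonempty, $P(\mathcal{Z},\boldsymbol{q})=\frac{\min_{Z\in\mathcal{Z}}T(Z,\boldsymbol{q})}{\min_{A\in\mathcal{A}}T(A,\boldsymbol{q})}-1$ (with $P(\emptyset,\boldsymbol{q})=\infty$), and total penalty $P(\mathcal{Z})=\sup_{\boldsymbol{q}}P(\mathcal{Z},\boldsymbol{q})$. *)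

theory Defs
  imports Complex_Main
begin

datatype mstruct = General | Symmetric | LowerTri | UpperTri
datatype mprop = Singular | Invertible | SPD | Orthogonal

text \<open>An operand: mstruct, mprop, and whether it appears inverted
  (transposition is ignored).\<close>
datatype operand = Op (st: mstruct) (pr: mprop) (inv: bool)

definition is_tri :: "mstruct \<Rightarrow> bool" where
  "is_tri s \<longleftrightarrow> s = LowerTri \<or> s = UpperTri"

text \<open>Necessarily square: non-general, inverted, or having a mprop
  (invertible, SPD, orthogonal) that only square matrices can have.\<close>
definition nec_square :: "operand \<Rightarrow> bool" where
  "nec_square x \<longleftrightarrow> st x \<noteq> General \<or> inv x \<or> pr x \<noteq> Singular"

definition valid_operand :: "operand \<Rightarrow> bool" where
  "valid_operand x \<longleftrightarrow> (inv x \<longrightarrow> pr x \<noteq> Singular) \<and> (pr x = SPD \<longrightarrow> st x = Symmetric)"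

definition valid_shape :: "(nat \<Rightarrow> operand) \<Rightarrow> nat \<Rightarrow> bool" where
  "valid_shape sh n \<longleftrightarrow> (\<forall>i\<in>{1..n}. valid_operand (sh i))"

definition consistent :: "(nat \<Rightarrow> operand) \<Rightarrow> nat \<Rightarrow> (nat \<Rightarrow> nat) \<Rightarrow> bool" where
  "consistent sh n q \<longleftrightarrow> (\<forall>i\<in>{0..n}. q i > 0) \<and>
     (\<forall>i\<in>{1..n}. nec_square (sh i) \<longrightarrow> q (i - 1) = q i)"

datatype kernel = GEMM | SYMM | TRMM | SYSYMM | TRSYMM | TRTRMM
  | GEGESV | GESYSV | GETRSV | SYGESV | SYSYSV | SYTRSV
  | POGESV | POSYSV | POTRSV | TRSM | TRSYSV | TRTRSV

definition mm_kernel :: "mstruct \<Rightarrow> mstruct \<Rightarrow> kernel" where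
  "mm_kernel s1 s2 =
    (if is_tri s1 \<and> is_tri s2 then TRTRMM
     else if (is_tri s1 \<and> s2 = Symmetric) \<or> (s1 = Symmetric \<and> is_tri s2) then TRSYMM
     else if is_tri s1 \<or> is_tri s2 then TRMM
     else if s1 = Symmetric \<and> s2 = Symmetric then SYSYMM
     else if s1 = Symmetric \<or> s2 = Symmetric then SYMM
     else GEMM)"

text \<open>Most specialized linear-solve kernel: coefficient operand c, right-hand
  side of mstruct r.\<close>
definition sv_kernel :: "operand \<Rightarrow> mstruct \<Rightarrow> kernel" where
  "sv_kernel c r =
    (if is_tri (st c) then (if r = General then TRSM else if r = Symmetric then TRSYSV else TRTRSV)
     else if pr c = SPD then (if r = General then POGESV else if r = Symmetric then POSYSV else POTRSV)
     else if st c = Symmetric then (if r = General then SYGESV else if r = Symmetric then SYSYSV else SYTRSV)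
     else (if r = General then GEGESV else if r = Symmetric then GESYSV else GETRSV))"

definition type2 :: "kernel \<Rightarrow> bool" where
  "type2 K \<longleftrightarrow> K \<in> {GEGESV, SYGESV, POGESV}"

definition beta1 :: "kernel \<Rightarrow> real" where
  "beta1 K = (if K = GEGESV then 2/3 else 1/3)"

definition beta2 :: "kernel \<Rightarrow> real" where
  "beta2 K = 2"

text \<open>Cost of one association with kernel K; \<open>left\<close> says whether the
  coefficient matrix of a solve is the left operand (Type IIa) or the right one
  (Type IIb).\<close>
definition phi :: "(kernel \<Rightarrow> real) \<Rightarrow> kernel \<Rightarrow> bool \<Rightarrow> real \<Rightarrow> real \<Rightarrow> real \<Rightarrow> real" where
  "phi \<beta> K left a b c =
    (if type2 K then
       (if left then beta1 K * a ^ 3 + beta2 K * a\<^sup>2 * c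
        else beta1 K * c ^ 3 + beta2 K * c\<^sup>2 * a)
     else \<beta> K * a * b * c)"

definition prod_struct :: "mstruct \<Rightarrow> mstruct \<Rightarrow> mstruct" where
  "prod_struct s1 s2 =
    (if s1 = LowerTri \<and> s2 = LowerTri then LowerTri
     else if s1 = UpperTri \<and> s2 = UpperTri then UpperTri else General)"

definition prod_prop :: "mprop \<Rightarrow> mprop \<Rightarrow> mprop" where
  "prod_prop p1 p2 =
    (if p1 = Orthogonal \<and> p2 = Orthogonal then Orthogonal
     else if p1 \<noteq> Singular \<and> p2 \<noteq> Singular then Invertible else Singular)"

text \<open>Operand that lets an inversion propagate: orthogonal or non-singular triangular.\<close>
definition prop_partner :: "operand \<Rightarrow> bool" where
  "prop_partner y \<longleftrightarrow> \<not> inv y \<and> (pr y = Orthogonal \<or> (is_tri (st y) \<and> pr y \<noteq> Singular))"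

definition gen_or_sym :: "operand \<Rightarrow> bool" where
  "gen_or_sym x \<longleftrightarrow> st x = General \<or> st x = Symmetric"

text \<open>Associate X (left) with Y (right): result operand, kernel, and whether the
  coefficient (if a solve) is on the left.\<close>
definition combine :: "operand \<Rightarrow> operand \<Rightarrow> operand \<times> kernel \<times> bool" where
  "combine X Y =
    (if inv X \<and> inv Y then
       \<comment> \<open>\<open>X\<^sup>-\<^sup>1 Y\<^sup>-\<^sup>1 = (Y X)\<^sup>-\<^sup>1\<close>\<close>
       (Op (prod_struct (st Y) (st X)) (prod_prop (pr Y) (pr X)) True,
        mm_kernel (st Y) (st X), False)
     else if inv X \<and> gen_or_sym X \<and> prop_partner Y then
       \<comment> \<open>\<open>X\<^sup>-\<^sup>1 Y = (Y\<^sup>-\<^sup>1 X)\<^sup>-\<^sup>1\<close>\<close>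
       (Op (prod_struct (st Y) (st X)) (prod_prop (pr Y) (pr X)) True,
        (if pr Y = Orthogonal then mm_kernel (st Y) (st X) else sv_kernel Y (st X)), True)
     else if inv Y \<and> gen_or_sym Y \<and> prop_partner X then
       \<comment> \<open>\<open>X Y\<^sup>-\<^sup>1 = (Y X\<^sup>-\<^sup>1)\<^sup>-\<^sup>1\<close>\<close>
       (Op (prod_struct (st Y) (st X)) (prod_prop (pr Y) (pr X)) True,
        (if pr X = Orthogonal then mm_kernel (st Y) (st X) else sv_kernel X (st Y)), False)
     else if inv X then
       (Op (prod_struct (st X) (st Y)) (prod_prop (pr X) (pr Y)) False, sv_kernel X (st Y), True)
     else if inv Y then
       (Op (prod_struct (st X) (st Y)) (prod_prop (pr X) (pr Y)) False, sv_kernel Y (st X), False)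
     else
       (Op (prod_struct (st X) (st Y)) (prod_prop (pr X) (pr Y)) False, mm_kernel (st X) (st Y), False))"

text \<open>\<open>Leaf k\<close> is the matrix \<open>M_k\<close> (sizes \<open>q_(k-1) \<times> q_k\<close>).\<close>
datatype ptree = Leaf nat | Node ptree ptree

fun lo :: "ptree \<Rightarrow> nat" where
  "lo (Leaf k) = k - 1"
| "lo (Node l r) = lo l"

fun hi :: "ptree \<Rightarrow> nat" where
  "hi (Leaf k) = k"
| "hi (Node l r) = hi r"

fun wf_tree :: "ptree \<Rightarrow> bool" where
  "wf_tree (Leaf k) \<longleftrightarrow> k \<ge> 1"
| "wf_tree (Node l r) \<longleftrightarrow> wf_tree l \<and> wf_tree r \<and> hi l = lo r"

text \<open>An association: kernel, coefficient-on-left flag, and indices (a,b,c).\<close>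
type_synonym assoc = "kernel \<times> bool \<times> nat \<times> nat \<times> nat"

text \<open>Evaluate a parenthesization: result operand and the variant, i.e. the
  sequence of associations (left subtree first, which is the leftmost-available
  order).\<close>
fun eval :: "(nat \<Rightarrow> operand) \<Rightarrow> ptree \<Rightarrow> operand \<times> assoc list" where
  "eval sh (Leaf k) = (sh k, [])"
| "eval sh (Node l r) =
    (let (x, al) = eval sh l; (y, ar) = eval sh r; (z, K, left) = combine x y
     in (z, al @ ar @ [(K, left, lo l, hi l, hi r)]))"

definition variant :: "(nat \<Rightarrow> operand) \<Rightarrow> ptree \<Rightarrow> assoc list" where
  "variant sh t = snd (eval sh t)"

definition all_variants :: "(nat \<Rightarrow> operand) \<Rightarrow> nat \<Rightarrow> assoc list set" where
  "all_variants sh n = {variant sh t | t. wf_tree t \<and> lo t = 0 \<and> hi t = n}"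

fun rtl :: "nat \<Rightarrow> nat \<Rightarrow> ptree" where
  "rtl i 0 = Leaf i"
| "rtl i (Suc k) = Node (Leaf i) (rtl (Suc i) k)"

fun ltr :: "nat \<Rightarrow> nat \<Rightarrow> ptree" where
  "ltr i 0 = Leaf i"
| "ltr i (Suc k) = Node (ltr i k) (Leaf (i + Suc k))"

definition fanout :: "nat \<Rightarrow> nat \<Rightarrow> ptree" where
  "fanout n h =
    (if h = 0 then ltr 1 (n - 1)
     else if h = n then rtl 1 (n - 1)
     else Node (rtl 1 (h - 1)) (ltr (h + 1) (n - h - 1)))"

definition fanout_variants :: "(nat \<Rightarrow> operand) \<Rightarrow> nat \<Rightarrow> assoc list set" where
  "fanout_variants sh n = {variant sh (fanout n h) | h. h \<le> n}"

definition cost :: "(kernel \<Rightarrow> real) \<Rightarrow> (nat \<Rightarrow> nat) \<Rightarrow> assoc list \<Rightarrow> real" where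
  "cost \<beta> q A = (\<Sum>(K, left, a, b, c) \<leftarrow> A. phi \<beta> K left (real (q a)) (real (q b)) (real (q c)))"

definition penalty :: "(kernel \<Rightarrow> real) \<Rightarrow> (nat \<Rightarrow> nat) \<Rightarrow> assoc list set \<Rightarrow> assoc list set \<Rightarrow> real" where
  "penalty \<beta> q Z A = Min (cost \<beta> q ` Z) / Min (cost \<beta> q ` A) - 1"

end

theory Submission
  imports Defs
begin

(* Let q_m be a smallest size. In every variant, the association that consumes M_i costs at
   least a constant times q_(i-1) q_i q_m, and at least a constant times q_i^3 if M_i is inverted
   and not triangular (it is then the square coefficient of a solve, or its partner is square);
   the last association costs at least a constant times q_0 q_m q_n. The associations of the
   fanning-out variant E^m have sizes (q_(i-1), q_i, q_m), (q_m, q_(i-1), q_i) and (q_0, q_m, q_n),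
   so each costs at most a constant times one of these lower bounds. Hence
   T(E^m) <= (n - 1) c min_A T(A), with c depending only on the kernel constants. *)

section \<open>Cost of a single association\<close>

lemma UNIV_kernel:
  "(UNIV :: kernel set) = {GEMM, SYMM, TRMM, SYSYMM, TRSYMM, TRTRMM, GEGESV, GESYSV, GETRSV,
     SYGESV, SYSYSV, SYTRSV, POGESV, POSYSV, POTRSV, TRSM, TRSYSV, TRTRSV}"
  using kernel.exhaust by auto

lemma finite_UNIV_kernel: "finite (UNIV :: kernel set)"
  by (simp add: UNIV_kernel)

(* Uniform bounds for the constants occurring in phi: the Type I constants \<beta> K, and
   beta1 K \<in> {1/3, 2/3}, beta2 K = 2 of the Type II kernels. *)
definition cost_coeff_min :: "(kernel \<Rightarrow> real) \<Rightarrow> real" where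
  "cost_coeff_min \<beta> = min (1/3) (Min (range \<beta>))"

definition cost_coeff_max :: "(kernel \<Rightarrow> real) \<Rightarrow> real" where
  "cost_coeff_max \<beta> = max 2 (Max (range \<beta>))"

definition cost_ratio :: "(kernel \<Rightarrow> real) \<Rightarrow> real" where
  "cost_ratio \<beta> = 2 * cost_coeff_max \<beta> / cost_coeff_min \<beta>"

lemma cost_coeff_min_pos: "(\<And>K. 0 < \<beta> K) \<Longrightarrow> 0 < cost_coeff_min \<beta>"
  using Min_in[of "range \<beta>"] finite_UNIV_kernel by (auto simp: cost_coeff_min_def)

lemma cost_coeff_min_le: "cost_coeff_min \<beta> \<le> \<beta> K" "cost_coeff_min \<beta> \<le> 1/3"
  using finite_UNIV_kernel by (auto simp: cost_coeff_min_def min.coboundedI2)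

lemma cost_coeff_max_ge: "\<beta> K \<le> cost_coeff_max \<beta>" "2 \<le> cost_coeff_max \<beta>"
  using finite_UNIV_kernel by (auto simp: cost_coeff_max_def max.coboundedI2)

lemma cost_ratio_pos: "(\<And>K. 0 < \<beta> K) \<Longrightarrow> 0 < cost_ratio \<beta>"
  using cost_coeff_min_pos cost_coeff_max_ge(2)[of \<beta>] by (simp add: cost_ratio_def)

definition phi_shape :: "kernel \<Rightarrow> bool \<Rightarrow> real \<Rightarrow> real \<Rightarrow> real \<Rightarrow> real" where
  "phi_shape K left a b c =
    (if type2 K then (if left then a ^ 3 + a\<^sup>2 * c else c ^ 3 + c\<^sup>2 * a) else a * b * c)"

lemma phi_ge_phi_shape:
  assumes "\<And>K. 0 < \<beta> K" and "0 \<le> a" "0 \<le> b" "0 \<le> c"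
  shows "cost_coeff_min \<beta> * phi_shape K left a b c \<le> phi \<beta> K left a b c"
proof -
  have "cost_coeff_min \<beta> \<le> beta1 K" "cost_coeff_min \<beta> \<le> beta2 K"
    using cost_coeff_min_le(2)[of \<beta>] by (auto simp: beta1_def beta2_def)
  with cost_coeff_min_le(1)[of \<beta> K] assms(2-4) show ?thesis
    by (auto simp: phi_def phi_shape_def distrib_left mult.assoc intro!: add_mono mult_right_mono)
qed

lemma phi_le_phi_shape:
  assumes "0 \<le> a" "0 \<le> b" "0 \<le> c"
  shows "phi \<beta> K left a b c \<le> cost_coeff_max \<beta> * phi_shape K left a b c"
proof -
  have "beta1 K \<le> cost_coeff_max \<beta>" "beta2 K \<le> cost_coeff_max \<beta>"
    using cost_coeff_max_ge(2)[of \<beta>] by (auto simp: beta1_def beta2_def)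
  with cost_coeff_max_ge(1)[of \<beta> K] assms show ?thesis
    by (auto simp: phi_def phi_shape_def distrib_left mult.assoc intro!: add_mono mult_right_mono)
qed

lemma phi_nonneg:
  "(\<And>K. 0 < \<beta> K) \<Longrightarrow> 0 \<le> a \<Longrightarrow> 0 \<le> b \<Longrightarrow> 0 \<le> c \<Longrightarrow> 0 \<le> phi \<beta> K left a b c"
  by (auto simp: phi_def beta1_def beta2_def less_imp_le)

lemma nec_square_combine: "nec_square (fst (combine X Y)) \<Longrightarrow> nec_square X \<and> nec_square Y"
  by (auto simp: combine_def nec_square_def prod_struct_def prod_prop_def prop_partner_def
      split: if_splits)

lemma combine_type2_left_coeff:
  "combine X Y = (z, K, True) \<Longrightarrow> type2 K \<Longrightarrow> inv X \<and> \<not> is_tri (st X)"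
  by (auto simp: combine_def type2_def sv_kernel_def mm_kernel_def prop_partner_def
      split: if_splits)

lemma combine_type2_right_coeff:
  "combine X Y = (z, K, False) \<Longrightarrow> type2 K \<Longrightarrow> inv Y \<and> \<not> is_tri (st Y)"
  by (auto simp: combine_def type2_def sv_kernel_def mm_kernel_def prop_partner_def
      split: if_splits)

lemma combine_inv_left_nec_square:
  "combine X Y = (z, K, left) \<Longrightarrow> inv X \<Longrightarrow> \<not> is_tri (st X) \<Longrightarrow> \<not> type2 K \<Longrightarrow> nec_square Y"
  by (auto simp: combine_def type2_def sv_kernel_def mm_kernel_def prop_partner_def nec_square_def
      split: if_splits)

lemma combine_inv_right_nec_square:
  "combine X Y = (z, K, left) \<Longrightarrow> inv Y \<Longrightarrow> \<not> is_tri (st Y) \<Longrightarrow> \<not> type2 K \<Longrightarrow> nec_square X"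
  by (auto simp: combine_def type2_def sv_kernel_def mm_kernel_def prop_partner_def nec_square_def
      split: if_splits)

(* The coefficient of a Type II solve is inverted, hence square: such a solve costs a
   product plus the cube of the coefficient size. *)
lemma phi_shape_combine:
  assumes "combine X Y = (z, K, left)"
    and "nec_square X \<Longrightarrow> a = b" and "nec_square Y \<Longrightarrow> b = c"
  shows "phi_shape K left a b c =
           a * b * c + (if type2 K then if left then a ^ 3 else c ^ 3 else 0)"
proof (cases "type2 K")
  case True
  then show ?thesis
  proof (cases left)
    case True
    with assms \<open>type2 K\<close> have "a = b"
      using combine_type2_left_coeff by (auto simp: nec_square_def)
    with True \<open>type2 K\<close> show ?thesis by (simp add: phi_shape_def power2_eq_square)
  next
    case False
    with assms \<open>type2 K\<close> have "b = c"
      using combine_type2_right_coeff by (auto simp: nec_square_def)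
    with False \<open>type2 K\<close> show ?thesis by (simp add: phi_shape_def power2_eq_square)
  qed
qed (simp add: phi_shape_def)

lemma phi_combine_ge_prod:
  assumes "\<And>K. 0 < \<beta> K" and "combine X Y = (z, K, left)"
    and "nec_square X \<Longrightarrow> a = b" and "nec_square Y \<Longrightarrow> b = c"
    and "0 \<le> a" "0 \<le> b" "0 \<le> c"
  shows "cost_coeff_min \<beta> * (a * b * c) \<le> phi \<beta> K left a b c"
proof -
  have "a * b * c \<le> phi_shape K left a b c"
    using phi_shape_combine[OF assms(2-4)] assms(5,7) by auto
  then show ?thesis
    using phi_ge_phi_shape[OF assms(1,5-7)] cost_coeff_min_pos[OF assms(1)]
    by (meson less_imp_le mult_left_mono order_trans)
qed

lemma phi_combine_ge_cube_left:
  assumes "\<And>K. 0 < \<beta> K" and "combine X Y = (z, K, left)"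
    and "nec_square X \<Longrightarrow> a = b" and "nec_square Y \<Longrightarrow> b = c"
    and "0 \<le> a" "0 \<le> b" "0 \<le> c" and "inv X" "\<not> is_tri (st X)"
  shows "cost_coeff_min \<beta> * a ^ 3 \<le> phi \<beta> K left a b c"
proof -
  have "a = b" using assms(3,8) by (simp add: nec_square_def)
  moreover have "\<not> type2 K \<or> \<not> left \<Longrightarrow> b = c"
    using assms combine_type2_right_coeff combine_inv_left_nec_square
    by (metis (full_types) nec_square_def)
  ultimately have "a ^ 3 \<le> phi_shape K left a b c"
    using phi_shape_combine[OF assms(2-4)] assms(5,7) by (auto simp: power3_eq_cube)
  then show ?thesis
    using phi_ge_phi_shape[OF assms(1,5-7)] cost_coeff_min_pos[OF assms(1)]
    by (meson less_imp_le mult_left_mono order_trans)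
qed

lemma phi_combine_ge_cube_right:
  assumes "\<And>K. 0 < \<beta> K" and "combine X Y = (z, K, left)"
    and "nec_square X \<Longrightarrow> a = b" and "nec_square Y \<Longrightarrow> b = c"
    and "0 \<le> a" "0 \<le> b" "0 \<le> c" and "inv Y" "\<not> is_tri (st Y)"
  shows "cost_coeff_min \<beta> * c ^ 3 \<le> phi \<beta> K left a b c"
proof -
  have "b = c" using assms(4,8) by (simp add: nec_square_def)
  moreover have "\<not> type2 K \<or> left \<Longrightarrow> a = b"
    using assms combine_type2_left_coeff combine_inv_right_nec_square
    by (metis (full_types) nec_square_def)
  ultimately have "c ^ 3 \<le> phi_shape K left a b c"
    using phi_shape_combine[OF assms(2-4)] assms(5,7) by (auto simp: power3_eq_cube)
  then show ?thesis
    using phi_ge_phi_shape[OF assms(1,5-7)] cost_coeff_min_pos[OF assms(1)]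
    by (meson less_imp_le mult_left_mono order_trans)
qed

lemma phi_combine_le:
  assumes "\<And>K. 0 < \<beta> K" and "combine X Y = (z, K, left)"
    and "nec_square X \<Longrightarrow> a = b" and "nec_square Y \<Longrightarrow> b = c"
    and "0 \<le> a" "0 \<le> b" "0 \<le> c"
    and prod: "cost_coeff_min \<beta> * (a * b * c) \<le> L"
    and cube: "type2 K \<Longrightarrow> cost_coeff_min \<beta> * (if left then a ^ 3 else c ^ 3) \<le> L"
  shows "phi \<beta> K left a b c \<le> cost_ratio \<beta> * L"
proof -
  let ?\<kappa> = "cost_coeff_min \<beta>"
  have \<kappa>: "0 < ?\<kappa>" using assms(1) by (rule cost_coeff_min_pos)
  have "0 \<le> ?\<kappa> * (a * b * c)" using \<kappa> assms(5-7) by simp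
  then have "?\<kappa> * phi_shape K left a b c \<le> 2 * L"
    using phi_shape_combine[OF assms(2-4)] prod cube
    by (auto simp: distrib_left)
  then have "phi_shape K left a b c \<le> 2 * L / ?\<kappa>"
    using \<kappa> by (simp add: le_divide_eq mult.commute)
  then have "cost_coeff_max \<beta> * phi_shape K left a b c \<le> cost_coeff_max \<beta> * (2 * L / ?\<kappa>)"
    by (rule mult_left_mono) (use cost_coeff_max_ge(2)[of \<beta>] in simp)
  then show ?thesis
    using phi_le_phi_shape[OF assms(5-7), of \<beta> K left] by (simp add: cost_ratio_def mult_ac)
qed

lemma cube_le_mult_of_le: "0 \<le> (s::real) \<Longrightarrow> s \<le> x \<Longrightarrow> s \<le> y \<Longrightarrow> s ^ 3 \<le> s * x * y"
  by (simp add: power3_eq_cube mult_left_mono mult_mono)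

section \<open>Parenthesizations and their variants\<close>

lemma lo_less_hi: "wf_tree t \<Longrightarrow> lo t < hi t"
  by (induction t) auto

lemma rtl_wf: "1 \<le> i \<Longrightarrow> wf_tree (rtl i k) \<and> lo (rtl i k) = i - 1 \<and> hi (rtl i k) = i + k"
  by (induction k arbitrary: i) auto

lemma ltr_wf: "1 \<le> i \<Longrightarrow> wf_tree (ltr i k) \<and> lo (ltr i k) = i - 1 \<and> hi (ltr i k) = i + k"
  by (induction k) auto

lemma fst_eval_Node: "fst (eval sh (Node l r)) = fst (combine (fst (eval sh l)) (fst (eval sh r)))"
  by (simp add: split_beta)

lemma variant_Leaf [simp]: "variant sh (Leaf k) = []"
  by (simp add: variant_def)

lemma variant_Node:
  "combine (fst (eval sh l)) (fst (eval sh r)) = (z, K, left) \<Longrightarrow>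
    variant sh (Node l r) = variant sh l @ variant sh r @ [(K, left, lo l, hi l, hi r)]"
  by (simp add: variant_def split_beta)

lemma cost_Nil [simp]: "cost \<beta> q [] = 0"
  by (simp add: cost_def)

lemma cost_Cons [simp]:
  "cost \<beta> q ((K, left, a, b, c) # A) =
    phi \<beta> K left (real (q a)) (real (q b)) (real (q c)) + cost \<beta> q A"
  by (simp add: cost_def)

lemma cost_append [simp]: "cost \<beta> q (A @ B) = cost \<beta> q A + cost \<beta> q B"
  by (simp add: cost_def)

lemma cost_nonneg: "(\<And>K. 0 < \<beta> K) \<Longrightarrow> 0 \<le> cost \<beta> q A"
  by (induction A) (auto simp: phi_nonneg)

lemma cost_variant_Node:
  assumes "combine (fst (eval sh l)) (fst (eval sh r)) = (z, K, left)"
  shows "cost \<beta> q (variant sh (Node l r)) = cost \<beta> q (variant sh l) + cost \<beta> q (variant sh r)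
           + phi \<beta> K left (real (q (lo l))) (real (q (hi l))) (real (q (hi r)))"
  using variant_Node[OF assms] by simp

lemma length_variant: "wf_tree t \<Longrightarrow> length (variant sh t) + lo t < hi t"
proof (induction t)
  case (Node l r)
  obtain z K left where "combine (fst (eval sh l)) (fst (eval sh r)) = (z, K, left)"
    by (metis prod_cases3)
  with Node lo_less_hi[of r] show ?case by (auto simp: variant_Node)
qed simp

lemma variant_indices_le:
  "wf_tree t \<Longrightarrow> (K, left, a, b, c) \<in> set (variant sh t) \<Longrightarrow> a \<le> hi t \<and> b \<le> hi t \<and> c \<le> hi t"
proof (induction t)
  case (Node l r)
  obtain z K' left' where "combine (fst (eval sh l)) (fst (eval sh r)) = (z, K', left')"
    by (metis prod_cases3)
  with Node lo_less_hi[of l] lo_less_hi[of r] show ?case by (force simp: variant_Node)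
qed simp

lemma finite_all_variants: "finite (all_variants sh n)"
proof (rule finite_subset)
  let ?A = "(UNIV :: kernel set) \<times> (UNIV :: bool set) \<times> {..n} \<times> {..n} \<times> {..n}"
  show "all_variants sh n \<subseteq> {A. set A \<subseteq> ?A \<and> length A \<le> n}"
  proof
    fix A assume "A \<in> all_variants sh n"
    then obtain t where "wf_tree t" "hi t = n" "A = variant sh t"
      by (auto simp: all_variants_def)
    then show "A \<in> {A. set A \<subseteq> ?A \<and> length A \<le> n}"
      using length_variant[of t sh] variant_indices_le[of t _ _ _ _ _ sh] by auto
  qed
  show "finite {A. set A \<subseteq> ?A \<and> length A \<le> n}"
    by (rule finite_lists_length_le) (simp add: finite_UNIV_kernel)
qed

fun subtrees :: "ptree \<Rightarrow> ptree set" where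
  "subtrees (Leaf k) = {Leaf k}"
| "subtrees (Node l r) = insert (Node l r) (subtrees l \<union> subtrees r)"

lemma subtrees_wf: "s \<in> subtrees t \<Longrightarrow> wf_tree t \<Longrightarrow> wf_tree s \<and> lo t \<le> lo s \<and> hi s \<le> hi t"
  by (induction t) (auto dest: lo_less_hi)

lemma cost_subtree_le:
  "(\<And>K. 0 < \<beta> K) \<Longrightarrow> s \<in> subtrees t \<Longrightarrow> cost \<beta> q (variant sh s) \<le> cost \<beta> q (variant sh t)"
proof (induction t)
  case (Node l r)
  obtain z K left where "combine (fst (eval sh l)) (fst (eval sh r)) = (z, K, left)"
    by (metis prod_cases3)
  then have "cost \<beta> q (variant sh (Node l r)) = cost \<beta> q (variant sh l) + cost \<beta> q (variant sh r)
      + phi \<beta> K left (real (q (lo l))) (real (q (hi l))) (real (q (hi r)))"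
    by (rule cost_variant_Node)
  moreover have "0 \<le> phi \<beta> K left (real (q (lo l))) (real (q (hi l))) (real (q (hi r)))"
    using Node.prems(1) by (rule phi_nonneg) auto
  moreover have "0 \<le> cost \<beta> q (variant sh l)" "0 \<le> cost \<beta> q (variant sh r)"
    using Node.prems(1) by (rule cost_nonneg)+
  ultimately have "cost \<beta> q (variant sh l) \<le> cost \<beta> q (variant sh (Node l r))"
      "cost \<beta> q (variant sh r) \<le> cost \<beta> q (variant sh (Node l r))"
    by linarith+
  with Node show ?case by (auto intro: order_trans)
qed simp

lemma leaf_parent_in_subtrees:
  assumes "wf_tree t" "lo t < i" "i \<le> hi t" "t \<noteq> Leaf i"
  obtains r where "Node (Leaf i) r \<in> subtrees t" | l where "Node l (Leaf i) \<in> subtrees t"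
  using assms
proof (induction t)
  case (Node l r)
  show ?case
  proof (cases "i \<le> hi l")
    case True
    with Node show ?thesis by (cases "l = Leaf i") auto
  next
    case False
    with Node show ?thesis by (cases "r = Leaf i") auto
  qed
qed simp

section \<open>The optimal cost and the fanning-out variant of a smallest size\<close>

locale chain_instance =
  fixes \<beta> :: "kernel \<Rightarrow> real" and sh :: "nat \<Rightarrow> operand" and n :: nat and q :: "nat \<Rightarrow> nat"
    and m :: nat
  assumes beta_pos: "\<And>K. 0 < \<beta> K"
    and consistent: "consistent sh n q"
    and chain_nonempty: "1 \<le> n"
    and min_size: "m \<le> n" "\<And>j. j \<le> n \<Longrightarrow> q m \<le> q j"
begin

lemma cost_coeff_min_nonneg: "0 \<le> cost_coeff_min \<beta>"
  using cost_coeff_min_pos[of \<beta>, OF beta_pos] by simp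

lemma size_square:
  "wf_tree t \<Longrightarrow> hi t \<le> n \<Longrightarrow> nec_square (fst (eval sh t)) \<Longrightarrow> q (lo t) = q (hi t)"
proof (induction t)
  case (Leaf k)
  then show ?case using consistent by (simp add: consistent_def)
next
  case (Node l r)
  then have "nec_square (fst (eval sh l)) \<and> nec_square (fst (eval sh r))"
    by (intro nec_square_combine) (simp only: fst_eval_Node)
  with Node lo_less_hi[of r] show ?case by auto
qed

lemma root_association:
  assumes "wf_tree (Node l r)" "hi r \<le> n"
  obtains z K left where "combine (fst (eval sh l)) (fst (eval sh r)) = (z, K, left)"
    and "nec_square (fst (eval sh l)) \<Longrightarrow> real (q (lo l)) = real (q (hi l))"
    and "nec_square (fst (eval sh r)) \<Longrightarrow> real (q (hi l)) = real (q (hi r))"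
    and "phi \<beta> K left (real (q (lo l))) (real (q (hi l))) (real (q (hi r)))
           \<le> cost \<beta> q (variant sh (Node l r))"
proof -
  obtain z K left where comb: "combine (fst (eval sh l)) (fst (eval sh r)) = (z, K, left)"
    by (metis prod_cases3)
  show thesis
  proof (rule that[OF comb])
    have "hi l \<le> n" using assms lo_less_hi[of r] by simp
    then show "nec_square (fst (eval sh l)) \<Longrightarrow> real (q (lo l)) = real (q (hi l))"
      using size_square[of l] assms(1) by simp
    show "nec_square (fst (eval sh r)) \<Longrightarrow> real (q (hi l)) = real (q (hi r))"
      using size_square[of r] assms by simp
    have "0 \<le> cost \<beta> q (variant sh l)" "0 \<le> cost \<beta> q (variant sh r)"
      using beta_pos by (rule cost_nonneg)+
    then show "phi \<beta> K left (real (q (lo l))) (real (q (hi l))) (real (q (hi r)))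
           \<le> cost \<beta> q (variant sh (Node l r))"
      using cost_variant_Node[OF comb, of \<beta> q] by simp
  qed
qed

lemma cost_Node_ge_prod:
  assumes "wf_tree (Node l r)" "hi r \<le> n"
  shows "cost_coeff_min \<beta> * (real (q (lo l)) * real (q (hi l)) * real (q (hi r)))
           \<le> cost \<beta> q (variant sh (Node l r))"
proof -
  obtain z K left where comb: "combine (fst (eval sh l)) (fst (eval sh r)) = (z, K, left)"
    and sq: "nec_square (fst (eval sh l)) \<Longrightarrow> real (q (lo l)) = real (q (hi l))"
      "nec_square (fst (eval sh r)) \<Longrightarrow> real (q (hi l)) = real (q (hi r))"
    and root: "phi \<beta> K left (real (q (lo l))) (real (q (hi l))) (real (q (hi r)))
           \<le> cost \<beta> q (variant sh (Node l r))"
    using root_association[OF assms] by blast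
  have "cost_coeff_min \<beta> * (real (q (lo l)) * real (q (hi l)) * real (q (hi r)))
          \<le> phi \<beta> K left (real (q (lo l))) (real (q (hi l))) (real (q (hi r)))"
    by (rule phi_combine_ge_prod[OF beta_pos comb sq]) simp_all
  with root show ?thesis by linarith
qed

lemma cost_Node_ge_cube_left:
  assumes "wf_tree (Node (Leaf i) r)" "hi r \<le> n" "inv (sh i)" "\<not> is_tri (st (sh i))"
  shows "cost_coeff_min \<beta> * real (q i) ^ 3 \<le> cost \<beta> q (variant sh (Node (Leaf i) r))"
proof -
  obtain z K left where comb: "combine (sh i) (fst (eval sh r)) = (z, K, left)"
    and sq: "nec_square (sh i) \<Longrightarrow> real (q (i - 1)) = real (q i)"
      "nec_square (fst (eval sh r)) \<Longrightarrow> real (q i) = real (q (hi r))"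
    and root: "phi \<beta> K left (real (q (i - 1))) (real (q i)) (real (q (hi r)))
           \<le> cost \<beta> q (variant sh (Node (Leaf i) r))"
    by (rule root_association[OF assms(1,2)]) simp
  have "cost_coeff_min \<beta> * real (q (i - 1)) ^ 3
          \<le> phi \<beta> K left (real (q (i - 1))) (real (q i)) (real (q (hi r)))"
    by (rule phi_combine_ge_cube_left[OF beta_pos comb sq _ _ _ assms(3,4)]) simp_all
  moreover have "real (q (i - 1)) = real (q i)"
    using sq(1) assms(3) by (simp add: nec_square_def)
  ultimately show ?thesis using root by simp
qed

lemma cost_Node_ge_cube_right:
  assumes "wf_tree (Node l (Leaf i))" "i \<le> n" "inv (sh i)" "\<not> is_tri (st (sh i))"
  shows "cost_coeff_min \<beta> * real (q i) ^ 3 \<le> cost \<beta> q (variant sh (Node l (Leaf i)))"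
proof -
  obtain z K left where comb: "combine (fst (eval sh l)) (sh i) = (z, K, left)"
    and sq: "nec_square (fst (eval sh l)) \<Longrightarrow> real (q (lo l)) = real (q (i - 1))"
      "nec_square (sh i) \<Longrightarrow> real (q (i - 1)) = real (q i)"
    and root: "phi \<beta> K left (real (q (lo l))) (real (q (i - 1))) (real (q i))
           \<le> cost \<beta> q (variant sh (Node l (Leaf i)))"
    by (rule root_association[OF assms(1)]) (use assms(1,2) in simp_all)
  have "cost_coeff_min \<beta> * real (q i) ^ 3
          \<le> phi \<beta> K left (real (q (lo l))) (real (q (i - 1))) (real (q i))"
    by (rule phi_combine_ge_cube_right[OF beta_pos comb sq _ _ _ assms(3,4)]) simp_all
  with root show ?thesis by simp
qed

definition opt_cost :: real where
  "opt_cost = Min (cost \<beta> q ` all_variants sh n)"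

lemma opt_cost_ge:
  assumes "\<And>T. wf_tree T \<Longrightarrow> lo T = 0 \<Longrightarrow> hi T = n \<Longrightarrow> x \<le> cost \<beta> q (variant sh T)"
  shows "x \<le> opt_cost"
proof -
  have "all_variants sh n \<noteq> {}"
    using ltr_wf[of 1 "n - 1"] chain_nonempty by (auto simp: all_variants_def)
  then show ?thesis
    using assms finite_all_variants by (auto simp: opt_cost_def all_variants_def)
qed

lemma opt_cost_nonneg: "0 \<le> opt_cost"
  using beta_pos by (intro opt_cost_ge cost_nonneg)

lemma full_tree_leaf_parent:
  assumes T: "wf_tree T" "lo T = 0" "hi T = n" and "2 \<le> n" "1 \<le> i" "i \<le> n"
  obtains r where "Node (Leaf i) r \<in> subtrees T" "wf_tree (Node (Leaf i) r)" "hi r \<le> n"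
  | l where "Node l (Leaf i) \<in> subtrees T" "wf_tree (Node l (Leaf i))" "lo l \<le> n"
proof -
  from T assms(4-6) have "lo T < i" "i \<le> hi T" "T \<noteq> Leaf i" by auto
  then show thesis
  proof (rule leaf_parent_in_subtrees[OF T(1)])
    fix r assume r: "Node (Leaf i) r \<in> subtrees T"
    show thesis using subtrees_wf[OF r T(1)] T by (intro that(1)[OF r]) auto
  next
    fix l assume l: "Node l (Leaf i) \<in> subtrees T"
    show thesis using subtrees_wf[OF l T(1)] T lo_less_hi[of l] by (intro that(2)[OF l]) auto
  qed
qed

lemma opt_cost_ge_leaf:
  assumes "2 \<le> n" "1 \<le> i" "i \<le> n"
  shows "cost_coeff_min \<beta> * (real (q (i - 1)) * real (q i) * real (q m)) \<le> opt_cost"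
proof (rule opt_cost_ge)
  fix T assume T: "wf_tree T" "lo T = 0" "hi T = n"
  note \<kappa> = cost_coeff_min_nonneg
  obtain s where s: "s \<in> subtrees T"
    and bound: "cost_coeff_min \<beta> * (real (q (i - 1)) * real (q i) * real (q m))
                  \<le> cost \<beta> q (variant sh s)"
  proof (cases rule: full_tree_leaf_parent[OF T assms])
    case (1 r)
    have "cost_coeff_min \<beta> * (real (q (i - 1)) * real (q i) * real (q m))
        \<le> cost_coeff_min \<beta> * (real (q (i - 1)) * real (q i) * real (q (hi r)))"
      using min_size(2)[OF 1(3)] \<kappa> by (intro mult_left_mono) auto
    also have "\<dots> \<le> cost \<beta> q (variant sh (Node (Leaf i) r))"
      using cost_Node_ge_prod[OF 1(2,3)] by simp
    finally show thesis by (rule that[OF 1(1)])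
  next
    case (2 l)
    have "real (q (i - 1)) * real (q i) * real (q m)
        \<le> real (q (i - 1)) * real (q i) * real (q (lo l))"
      using min_size(2)[OF 2(3)] by (intro mult_left_mono) auto
    then have "cost_coeff_min \<beta> * (real (q (i - 1)) * real (q i) * real (q m))
        \<le> cost_coeff_min \<beta> * (real (q (i - 1)) * real (q i) * real (q (lo l)))"
      using \<kappa> by (rule mult_left_mono)
    also have "\<dots> = cost_coeff_min \<beta> * (real (q (lo l)) * real (q (i - 1)) * real (q i))"
      by (simp add: mult_ac)
    also have "\<dots> \<le> cost \<beta> q (variant sh (Node l (Leaf i)))"
      using cost_Node_ge_prod[OF 2(2)] 2(2) assms(3) by simp
    finally show thesis by (rule that[OF 2(1)])
  qed
  show "cost_coeff_min \<beta> * (real (q (i - 1)) * real (q i) * real (q m)) \<le> cost \<beta> q (variant sh T)"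
    using bound cost_subtree_le[OF beta_pos s] by (rule order_trans)
qed

lemma opt_cost_ge_cube:
  assumes "2 \<le> n" "1 \<le> i" "i \<le> n" "inv (sh i)" "\<not> is_tri (st (sh i))"
  shows "cost_coeff_min \<beta> * real (q i) ^ 3 \<le> opt_cost"
proof (rule opt_cost_ge)
  fix T assume T: "wf_tree T" "lo T = 0" "hi T = n"
  obtain s where s: "s \<in> subtrees T"
    and bound: "cost_coeff_min \<beta> * real (q i) ^ 3 \<le> cost \<beta> q (variant sh s)"
  proof (cases rule: full_tree_leaf_parent[OF T assms(1-3)])
    case (1 r)
    show thesis by (rule that[OF 1(1) cost_Node_ge_cube_left[OF 1(2,3) assms(4,5)]])
  next
    case (2 l)
    show thesis by (rule that[OF 2(1) cost_Node_ge_cube_right[OF 2(2) assms(3-5)]])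
  qed
  show "cost_coeff_min \<beta> * real (q i) ^ 3 \<le> cost \<beta> q (variant sh T)"
    using bound cost_subtree_le[OF beta_pos s] by (rule order_trans)
qed

lemma opt_cost_ge_root:
  assumes "2 \<le> n"
  shows "cost_coeff_min \<beta> * (real (q 0) * real (q m) * real (q n)) \<le> opt_cost"
proof (rule opt_cost_ge)
  fix T assume T: "wf_tree T" "lo T = 0" "hi T = n"
  with assms obtain l r where lr: "T = Node l r" by (cases T) auto
  have "hi l \<le> n" using T lr lo_less_hi[of r] by auto
  then have "cost_coeff_min \<beta> * (real (q 0) * real (q m) * real (q n))
      \<le> cost_coeff_min \<beta> * (real (q 0) * real (q (hi l)) * real (q n))"
    using min_size(2) cost_coeff_min_nonneg by (intro mult_left_mono mult_right_mono) auto
  also have "\<dots> \<le> cost \<beta> q (variant sh T)"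
    using cost_Node_ge_prod[of l r] T lr by simp
  finally show "cost_coeff_min \<beta> * (real (q 0) * real (q m) * real (q n))
      \<le> cost \<beta> q (variant sh T)" .
qed

lemma rtl_association_cost_le:
  assumes "combine (sh i) Y = (z, K, left)" and "nec_square Y \<Longrightarrow> q i = q m"
    and "1 \<le> i" "i < m"
  shows "phi \<beta> K left (real (q (i - 1))) (real (q i)) (real (q m)) \<le> cost_ratio \<beta> * opt_cost"
proof (rule phi_combine_le[OF beta_pos assms(1)])
  let ?a = "real (q (i - 1))" and ?b = "real (q i)" and ?c = "real (q m)"
  show sq: "nec_square (sh i) \<Longrightarrow> ?a = ?b"
    using size_square[of "Leaf i"] assms(3,4) min_size(1) by auto
  show "nec_square Y \<Longrightarrow> ?b = ?c" using assms(2) by simp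
  show prod: "cost_coeff_min \<beta> * (?a * ?b * ?c) \<le> opt_cost"
    using opt_cost_ge_leaf assms(3,4) min_size(1) by simp
  show "cost_coeff_min \<beta> * (if left then ?a ^ 3 else ?c ^ 3) \<le> opt_cost" if "type2 K"
  proof (cases left)
    case True
    then have "inv (sh i) \<and> \<not> is_tri (st (sh i))"
      using combine_type2_left_coeff[of "sh i" Y z K] assms(1) that by simp
    with sq True show ?thesis
      using opt_cost_ge_cube[of i] assms(3,4) min_size(1) by (simp add: nec_square_def)
  next
    case False
    have "?c ^ 3 \<le> ?c * ?a * ?b"
      using min_size assms(4) by (intro cube_le_mult_of_le) auto
    then have "cost_coeff_min \<beta> * ?c ^ 3 \<le> cost_coeff_min \<beta> * (?a * ?b * ?c)"
      using cost_coeff_min_nonneg by (simp add: mult_left_mono mult_ac)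
    with False prod show ?thesis by simp
  qed
qed simp_all

lemma ltr_association_cost_le:
  assumes "combine X (sh j) = (z, K, left)" and "nec_square X \<Longrightarrow> q m = q (j - 1)"
    and "m + 1 < j" "j \<le> n"
  shows "phi \<beta> K left (real (q m)) (real (q (j - 1))) (real (q j)) \<le> cost_ratio \<beta> * opt_cost"
proof (rule phi_combine_le[OF beta_pos assms(1)])
  let ?a = "real (q m)" and ?b = "real (q (j - 1))" and ?c = "real (q j)"
  show "nec_square X \<Longrightarrow> ?a = ?b" using assms(2) by simp
  show sq: "nec_square (sh j) \<Longrightarrow> ?b = ?c"
    using size_square[of "Leaf j"] assms(3,4) by auto
  have "cost_coeff_min \<beta> * (?b * ?c * ?a) \<le> opt_cost"
    using opt_cost_ge_leaf[of j] assms(3,4) by simp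
  then show prod: "cost_coeff_min \<beta> * (?a * ?b * ?c) \<le> opt_cost"
    by (simp add: mult_ac)
  show "cost_coeff_min \<beta> * (if left then ?a ^ 3 else ?c ^ 3) \<le> opt_cost" if "type2 K"
  proof (cases left)
    case True
    have "?a ^ 3 \<le> ?a * ?b * ?c"
      using min_size assms(3,4) by (intro cube_le_mult_of_le) auto
    then have "cost_coeff_min \<beta> * ?a ^ 3 \<le> cost_coeff_min \<beta> * (?a * ?b * ?c)"
      using cost_coeff_min_nonneg by (rule mult_left_mono)
    with True prod show ?thesis by simp
  next
    case False
    then have "inv (sh j) \<and> \<not> is_tri (st (sh j))"
      using combine_type2_right_coeff[of X "sh j" z K] assms(1) that by simp
    with False show ?thesis
      using opt_cost_ge_cube[of j] assms(3,4) by simp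
  qed
qed simp_all

lemma fanout_root_cost_le:
  assumes "combine X Y = (z, K, left)"
    and "nec_square X \<Longrightarrow> q 0 = q m" "nec_square Y \<Longrightarrow> q m = q n"
    and "0 < m" "m < n"
  shows "phi \<beta> K left (real (q 0)) (real (q m)) (real (q n)) \<le> cost_ratio \<beta> * opt_cost"
proof (rule phi_combine_le[OF beta_pos assms(1)])
  let ?a = "real (q 0)" and ?b = "real (q m)" and ?c = "real (q n)"
  show sq: "nec_square X \<Longrightarrow> ?a = ?b" "nec_square Y \<Longrightarrow> ?b = ?c"
    using assms(2,3) by simp_all
  show prod: "cost_coeff_min \<beta> * (?a * ?b * ?c) \<le> opt_cost"
    using opt_cost_ge_root assms(4,5) by simp
  show "cost_coeff_min \<beta> * (if left then ?a ^ 3 else ?c ^ 3) \<le> opt_cost" if "type2 K"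
  proof (cases left)
    case True
    then have "?a = ?b"
      using combine_type2_left_coeff[OF _ that] assms(1) sq(1) by (simp add: nec_square_def)
    then have "?a ^ 3 \<le> ?a * ?b * ?c"
      using min_size by (intro cube_le_mult_of_le) auto
    then have "cost_coeff_min \<beta> * ?a ^ 3 \<le> cost_coeff_min \<beta> * (?a * ?b * ?c)"
      using cost_coeff_min_nonneg by (rule mult_left_mono)
    with True prod show ?thesis by simp
  next
    case False
    then have "?b = ?c"
      using combine_type2_right_coeff[OF _ that] assms(1) sq(2) by (simp add: nec_square_def)
    then have "?c ^ 3 \<le> ?c * ?a * ?b"
      using min_size by (intro cube_le_mult_of_le) auto
    then have "cost_coeff_min \<beta> * ?c ^ 3 \<le> cost_coeff_min \<beta> * (?a * ?b * ?c)"
      using cost_coeff_min_nonneg by (simp add: mult_left_mono mult_ac)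
    with False prod show ?thesis by simp
  qed
qed simp_all

lemma cost_rtl_le:
  "1 \<le> i \<Longrightarrow> i + k = m \<Longrightarrow>
    cost \<beta> q (variant sh (rtl i k)) \<le> real k * cost_ratio \<beta> * opt_cost"
proof (induction k arbitrary: i)
  case (Suc k)
  let ?Y = "fst (eval sh (rtl (Suc i) k))"
  obtain z K left where comb: "combine (sh i) ?Y = (z, K, left)"
    by (metis prod_cases3)
  have Y: "wf_tree (rtl (Suc i) k)" "lo (rtl (Suc i) k) = i" "hi (rtl (Suc i) k) = m"
    using rtl_wf[of "Suc i" k] Suc.prems by auto
  have "variant sh (rtl i (Suc k)) = variant sh (rtl (Suc i) k) @ [(K, left, i - 1, i, m)]"
    using variant_Node[of sh "Leaf i" "rtl (Suc i) k"] comb Y by simp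
  moreover have "phi \<beta> K left (real (q (i - 1))) (real (q i)) (real (q m)) \<le> cost_ratio \<beta> * opt_cost"
    using size_square[OF Y(1)] Y Suc.prems min_size(1)
    by (intro rtl_association_cost_le[OF comb]) auto
  ultimately show ?case
    using Suc.IH[of "Suc i"] Suc.prems by (simp add: algebra_simps)
qed simp

lemma cost_ltr_le:
  "m + 1 + k \<le> n \<Longrightarrow>
    cost \<beta> q (variant sh (ltr (m + 1) k)) \<le> real k * cost_ratio \<beta> * opt_cost"
proof (induction k)
  case (Suc k)
  let ?j = "m + 1 + Suc k"
  let ?X = "fst (eval sh (ltr (m + 1) k))"
  obtain z K left where comb: "combine ?X (sh ?j) = (z, K, left)"
    by (metis prod_cases3)
  have X: "wf_tree (ltr (m + 1) k)" "lo (ltr (m + 1) k) = m" "hi (ltr (m + 1) k) = ?j - 1"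
    using ltr_wf[of "m + 1" k] by auto
  have "variant sh (ltr (m + 1) (Suc k)) =
      variant sh (ltr (m + 1) k) @ [(K, left, m, ?j - 1, ?j)]"
    using variant_Node[of sh "ltr (m + 1) k" "Leaf ?j"] comb X by simp
  moreover have "phi \<beta> K left (real (q m)) (real (q (?j - 1))) (real (q ?j))
      \<le> cost_ratio \<beta> * opt_cost"
    using size_square[OF X(1)] X Suc.prems by (intro ltr_association_cost_le[OF comb]) auto
  ultimately show ?case
    using Suc by (simp add: algebra_simps)
qed simp

lemma cost_fanout_le:
  "cost \<beta> q (variant sh (fanout n m)) \<le> real (n - 1) * cost_ratio \<beta> * opt_cost"
proof -
  consider "m = 0" | "m = n" "m \<noteq> 0" | "0 < m" "m < n"
    using min_size(1) by linarith
  then show ?thesis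
  proof cases
    case 1
    then show ?thesis using cost_ltr_le[of "n - 1"] chain_nonempty by (simp add: fanout_def)
  next
    case 2
    then show ?thesis using cost_rtl_le[of 1 "n - 1"] chain_nonempty by (simp add: fanout_def)
  next
    case 3
    let ?l = "rtl 1 (m - 1)" and ?r = "ltr (m + 1) (n - m - 1)"
    have l: "wf_tree ?l" "lo ?l = 0" "hi ?l = m" and r: "wf_tree ?r" "lo ?r = m" "hi ?r = n"
      using rtl_wf[of 1 "m - 1"] ltr_wf[of "m + 1" "n - m - 1"] 3 by auto
    obtain z K left where comb: "combine (fst (eval sh ?l)) (fst (eval sh ?r)) = (z, K, left)"
      by (metis prod_cases3)
    have "variant sh (fanout n m) = variant sh ?l @ variant sh ?r @ [(K, left, 0, m, n)]"
      using variant_Node[OF comb] l r 3 by (simp add: fanout_def)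
    moreover have "phi \<beta> K left (real (q 0)) (real (q m)) (real (q n)) \<le> cost_ratio \<beta> * opt_cost"
      using size_square[OF l(1)] size_square[OF r(1)] l r 3
      by (intro fanout_root_cost_le[OF comb]) auto
    moreover have "real (m - 1) + real (n - m - 1) + 1 = real (n - 1)"
      using 3 by simp
    ultimately show ?thesis
      using cost_rtl_le[of 1 "m - 1"] cost_ltr_le[of "n - m - 1"] 3
      by (simp add: algebra_simps)
  qed
qed

end

theorem theorem1:
  fixes n :: nat and sh :: "nat \<Rightarrow> operand" and \<beta> :: "kernel \<Rightarrow> real"
  assumes "n \<ge> 1"
    and "valid_shape sh n"
    and "\<forall>K. \<beta> K > 0"
  shows "\<exists>C. \<forall>q. consistent sh n q \<longrightarrow>
           penalty \<beta> q (fanout_variants sh n) (all_variants sh n) \<le> C"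
proof (intro exI allI impI)
  fix q assume "consistent sh n q"
  obtain m where m: "m \<le> n" "\<And>j. j \<le> n \<Longrightarrow> q m \<le> q j"
    using ex_has_least_nat[of "\<lambda>j. j \<le> n" 0 q] by auto
  interpret chain_instance \<beta> sh n q m
    using assms(1,3) \<open>consistent sh n q\<close> m by unfold_locales auto
  have "Min (cost \<beta> q ` fanout_variants sh n) \<le> cost \<beta> q (variant sh (fanout n m))"
    using m(1) by (intro Min_le) (auto simp: fanout_variants_def finite_image_set)
  also have "\<dots> \<le> real (n - 1) * cost_ratio \<beta> * opt_cost"
    by (rule cost_fanout_le)
  finally have "Min (cost \<beta> q ` fanout_variants sh n) / opt_cost \<le> real (n - 1) * cost_ratio \<beta>"
    using opt_cost_nonneg cost_ratio_pos[of \<beta>, OF beta_pos]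
    by (cases "opt_cost = 0") (auto simp: pos_divide_le_eq)
  then show "penalty \<beta> q (fanout_variants sh n) (all_variants sh n)
      \<le> real (n - 1) * cost_ratio \<beta> - 1"
    by (simp add: penalty_def opt_cost_def)
qed

end
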